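(* Let $n\ge 2$ and let $p=a_1a_2\cdots a_n$ be a permutation of $\{1,\dots,n\}$ such that $a_{j+1}=a_j+1$ for some $j\in\{1,\dots,n-1\}$. Let $\hat p|_{\{a_j\}}$ denote the permutation of $\{1,\dots,n-1\}$ that is order-isomorphic to the sequence obtained from $p$ by deleting the entry $a_j$. Then $p$ is achievable by two stacks in series if and only if $\hat p|_{\{a_j\}}$ is achievable by two stacks in series.
   Context: Two stacks in series: a machine with an input stream, a first stack, a second stack and an output stream, with three moves: $\rho$ moves the next element of the input onto the top of the first stack; $\lambda$ moves the top element of the first stack onto the top of the second stack; $\mu$ moves the top element of the second stack to the end of the output. A permutation $q$ of $\{1,\dots,m\}$ is achievable if, starting with input $1,2,\dots,m$ (in this order) and both stacks empty, some finite sequence of these moves ends with empty input, empty stacks, and output equal to $q$. *)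

theory Defs
  imports Main
begin

text \<open>Configurations of the machine: (input, first stack, second stack, output).
  Stacks are lists whose head is the top element.\<close>
type_synonym config = "nat list \<times> nat list \<times> nat list \<times> nat list"

inductive move :: "config \<Rightarrow> config \<Rightarrow> bool" where
  rho: "move (x # inp, s1, s2, out) (inp, x # s1, s2, out)"
| lambda: "move (inp, x # s1, s2, out) (inp, s1, x # s2, out)"
| mu: "move (inp, s1, x # s2, out) (inp, s1, s2, out @ [x])"

definition achievable :: "nat list \<Rightarrow> bool" where
  "achievable q \<longleftrightarrow> move\<^sup>*\<^sup>* ([1..<length q + 1], [], [], []) ([], [], [], q)"

definition is_perm :: "nat \<Rightarrow> nat list \<Rightarrow> bool" where
  "is_perm n p \<longleftrightarrow> length p = n \<and> distinct p \<and> set p = {1..n}"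

definition order_iso :: "nat list \<Rightarrow> nat list \<Rightarrow> bool" where
  "order_iso xs ys \<longleftrightarrow> length xs = length ys \<and>
     (\<forall>i < length xs. \<forall>k < length xs. xs ! i < xs ! k \<longleftrightarrow> ys ! i < ys ! k)"

end

theory Submission
  imports Defs
begin

text \<open>Both directions transform runs of the machine. Deleting the value \<open>v\<close> from every
  list of every configuration of a run for \<open>p\<close> yields a run (each move either survives or
  becomes idle). Conversely, since \<open>v\<close> and \<open>v + 1\<close> are adjacent both in the input and in
  \<open>p\<close>, a run producing \<open>p\<close> with \<open>v\<close> deleted can be turned back into a run for \<open>p\<close> by letting
  \<open>v\<close> travel glued to \<open>v + 1\<close>: each move of \<open>v + 1\<close> becomes two moves. Relabelling by the
  order-preserving map that skips \<open>v\<close> finally identifies the shortened output with the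
  standardisation \<open>q\<close>.\<close>

definition produces :: "nat list \<Rightarrow> nat list \<Rightarrow> bool" where
  "produces inp out \<longleftrightarrow> move\<^sup>*\<^sup>* (inp, [], [], []) ([], [], [], out)"

lemma achievable_iff_produces: "achievable q \<longleftrightarrow> produces [1..<length q + 1] q"
  by (simp add: achievable_def produces_def)

lemma rtranclp_simulation:
  assumes "\<And>x y. r x y \<Longrightarrow> s\<^sup>*\<^sup>* (f x) (f y)" and "r\<^sup>*\<^sup>* x y"
  shows "s\<^sup>*\<^sup>* (f x) (f y)"
  using assms(2)
proof induction
  case (step y z)
  then show ?case
    using assms(1) rtranclp_trans by metis
qed simp

lemma produces_simulation:
  assumes "\<And>c c'. move c c' \<Longrightarrow> move\<^sup>*\<^sup>* (F c) (F c')"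
    and "F (inp, [], [], []) = (inp', [], [], [])" and "F ([], [], [], out) = ([], [], [], out')"
    and "produces inp out"
  shows "produces inp' out'"
  using rtranclp_simulation[of move move F, OF assms(1) assms(4)[unfolded produces_def]] assms(2,3)
  by (simp add: produces_def)

fun map_config :: "(nat \<Rightarrow> nat) \<Rightarrow> config \<Rightarrow> config" where
  "map_config f (inp, s1, s2, out) = (map f inp, map f s1, map f s2, map f out)"

lemma move_map_config: "move c c' \<Longrightarrow> move (map_config f c) (map_config f c')"
  by (induction rule: move.induct) (auto intro: move.intros)

lemma produces_map: "produces inp out \<Longrightarrow> produces (map f inp) (map f out)"
  by (rule produces_simulation[of "map_config f"]) (auto intro: move_map_config)

lemma produces_map_iff:
  assumes "inj f"
  shows "produces (map f inp) (map f out) \<longleftrightarrow> produces inp out"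
  using produces_map[of "map f inp" "map f out" "inv f"] produces_map[of inp out f]
  by (auto simp: inv_f_f[OF assms] map_idI)

fun filter_config :: "(nat \<Rightarrow> bool) \<Rightarrow> config \<Rightarrow> config" where
  "filter_config P (inp, s1, s2, out) = (filter P inp, filter P s1, filter P s2, filter P out)"

lemma move_filter_config: "move c c' \<Longrightarrow> move\<^sup>*\<^sup>* (filter_config P c) (filter_config P c')"
  by (induction rule: move.induct) (auto intro: move.intros)

lemma produces_filter: "produces inp out \<Longrightarrow> produces (filter P inp) (filter P out)"
  by (rule produces_simulation[of "filter_config P"]) (auto intro: move_filter_config)

definition ins_before :: "nat \<Rightarrow> nat \<Rightarrow> nat list \<Rightarrow> nat list" where
  "ins_before v u xs = concat (map (\<lambda>x. if x = u then [v, u] else [x]) xs)"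

definition ins_after :: "nat \<Rightarrow> nat \<Rightarrow> nat list \<Rightarrow> nat list" where
  "ins_after v u xs = concat (map (\<lambda>x. if x = u then [u, v] else [x]) xs)"

lemma ins_before_simps [simp]:
  "ins_before v u [] = []"
  "ins_before v u (x # xs) = (if x = u then [v, u] else [x]) @ ins_before v u xs"
  "ins_before v u (xs @ ys) = ins_before v u xs @ ins_before v u ys"
  by (simp_all add: ins_before_def)

lemma ins_after_simps [simp]:
  "ins_after v u [] = []"
  "ins_after v u (x # xs) = (if x = u then [u, v] else [x]) @ ins_after v u xs"
  by (simp_all add: ins_after_def)

lemma ins_before_id: "u \<notin> set xs \<Longrightarrow> ins_before v u xs = xs"
  by (induction xs) auto

text \<open>The first stack reverses the order of its contents, so there \<open>v\<close> sits below \<open>u\<close>.\<close>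

fun glue_config :: "nat \<Rightarrow> nat \<Rightarrow> config \<Rightarrow> config" where
  "glue_config v u (inp, s1, s2, out) =
     (ins_before v u inp, ins_after v u s1, ins_before v u s2, ins_before v u out)"

lemma move_two_steps: "move c c' \<Longrightarrow> move c' c'' \<Longrightarrow> move\<^sup>*\<^sup>* c c''"
  by (meson converse_rtranclp_into_rtranclp r_into_rtranclp)

lemma move_glue_config: "move c c' \<Longrightarrow> move\<^sup>*\<^sup>* (glue_config v u c) (glue_config v u c')"
proof (induction rule: move.induct)
  case (rho x inp s1 s2 out)
  then show ?case
    by (cases "x = u") (auto intro: move.rho move_two_steps)
next
  case (lambda inp x s1 s2 out)
  then show ?case
    by (cases "x = u") (auto intro: move.lambda move_two_steps)
next
  case (mu inp s1 x s2 out)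
  have "move\<^sup>*\<^sup>* (i, a, v # u # b, c) (i, a, b, c @ [v, u])" for i a b c
    using move_two_steps[OF move.mu[of i a v "u # b" c] move.mu[of i a u b "c @ [v]"]] by simp
  then show ?case
    by (cases "x = u") (auto intro: move.mu)
qed

lemma produces_glue: "produces inp out \<Longrightarrow> produces (ins_before v u inp) (ins_before v u out)"
  by (rule produces_simulation[of "glue_config v u"]) (auto intro: move_glue_config)

lemma produces_adjacent_pair_iff:
  assumes "distinct (a @ v # u # b)" and "distinct (c @ v # u # d)"
  shows "produces (a @ v # u # b) (c @ v # u # d) \<longleftrightarrow> produces (a @ u # b) (c @ u # d)"
proof
  have "filter (\<lambda>x. x \<noteq> v) zs = zs" if "v \<notin> set zs" for zs
    using that by (auto intro: filter_True)
  then have "filter (\<lambda>x. x \<noteq> v) (a @ v # u # b) = a @ u # b"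
    and "filter (\<lambda>x. x \<noteq> v) (c @ v # u # d) = c @ u # d"
    using assms by auto
  then show "produces (a @ v # u # b) (c @ v # u # d) \<Longrightarrow> produces (a @ u # b) (c @ u # d)"
    using produces_filter[of "a @ v # u # b" "c @ v # u # d" "\<lambda>x. x \<noteq> v"] by argo
next
  have "ins_before v u (a @ u # b) = a @ v # u # b"
    and "ins_before v u (c @ u # d) = c @ v # u # d"
    using assms by (simp_all add: ins_before_id)
  then show "produces (a @ u # b) (c @ u # d) \<Longrightarrow> produces (a @ v # u # b) (c @ v # u # d)"
    using produces_glue[of "a @ u # b" "c @ u # d" v u] by argo
qed

lemma card_less_nth_eq_card_less:
  assumes "distinct xs"
  shows "card {k. k < length xs \<and> xs ! k < y} = card {z \<in> set xs. z < y}"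
proof -
  have "{z \<in> set xs. z < y} = nth xs ` {k. k < length xs \<and> xs ! k < y}"
    by (auto simp: in_set_conv_nth)
  moreover have "inj_on (nth xs) {k. k < length xs \<and> xs ! k < y}"
    using assms by (simp add: inj_on_nth)
  ultimately show ?thesis by (simp add: card_image)
qed

text \<open>An entry of a distinct list is determined by the number of entries below it.\<close>

lemma order_iso_eq:
  assumes "distinct xs" "distinct ys" "set xs = set ys" "order_iso xs ys"
  shows "xs = ys"
proof (rule nth_equalityI)
  show len: "length xs = length ys"
    using assms(4) by (simp add: order_iso_def)
  define rank where "rank y = card {z \<in> set xs. z < y}" for y
  have rank_mono: "rank y < rank y'" if "y < y'" "y \<in> set xs" for y y'
    unfolding rank_def using that by (intro psubset_card_mono) auto
  fix i assume i: "i < length xs"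
  have "rank (xs ! i) = card {k. k < length xs \<and> xs ! k < xs ! i}"
    using card_less_nth_eq_card_less[OF assms(1)] by (simp add: rank_def)
  also have "{k. k < length xs \<and> xs ! k < xs ! i} = {k. k < length ys \<and> ys ! k < ys ! i}"
    using assms(4) i len unfolding order_iso_def by auto
  also have "card \<dots> = rank (ys ! i)"
    using card_less_nth_eq_card_less[OF assms(2)] assms(3) by (simp add: rank_def)
  finally have "rank (xs ! i) = rank (ys ! i)" .
  moreover have "xs ! i \<in> set xs" "ys ! i \<in> set xs"
    using i len assms(3) by (metis nth_mem)+
  ultimately show "xs ! i = ys ! i"
    using rank_mono[of "xs ! i" "ys ! i"] rank_mono[of "ys ! i" "xs ! i"]
    by (cases "xs ! i" "ys ! i" rule: linorder_cases) auto
qed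

lemma order_iso_map_strict_mono:
  "strict_mono f \<Longrightarrow> order_iso (map f xs) ys \<longleftrightarrow> order_iso xs ys"
  by (simp add: order_iso_def strict_mono_less)

definition skip :: "nat \<Rightarrow> nat \<Rightarrow> nat" where
  "skip v x = (if x < v then x else Suc x)"

lemma strict_mono_skip: "strict_mono (skip v)"
  by (rule strict_monoI) (auto simp: skip_def)

lemma skip_image_atLeastAtMost:
  assumes "1 \<le> v" "v \<le> Suc m"
  shows "skip v ` {1..m} = {1..Suc m} - {v}"
proof
  show "skip v ` {1..m} \<subseteq> {1..Suc m} - {v}"
    using assms by (auto simp: skip_def)
  show "{1..Suc m} - {v} \<subseteq> skip v ` {1..m}"
  proof
    fix y assume y: "y \<in> {1..Suc m} - {v}"
    show "y \<in> skip v ` {1..m}"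
    proof (cases "y < v")
      case True
      then show ?thesis
        using y assms by (intro image_eqI[of _ _ y]) (auto simp: skip_def)
    next
      case False
      then show ?thesis
        using y assms by (intro image_eqI[of _ _ "y - 1"]) (auto simp: skip_def)
    qed
  qed
qed

lemma map_skip_upt:
  assumes "1 \<le> v" "v \<le> n"
  shows "map (skip v) [1..<n] = [1..<v] @ [Suc v..<Suc n]"
proof -
  have "[1..<n] = [1..<v] @ [v..<n]"
    using assms upt_add_eq_append[of 1 v "n - v"] by simp
  moreover have "map (skip v) [1..<v] = [1..<v]"
    by (rule map_idI) (simp add: skip_def)
  moreover have "map (skip v) [v..<n] = map Suc [v..<n]"
    by (simp add: skip_def)
  ultimately show ?thesis
    by (simp add: map_Suc_upt)
qed

lemma standardisation_eq_map_skip: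
  assumes "is_perm m q" "order_iso q xs" "distinct xs" "set xs = {1..Suc m} - {v}"
    and "1 \<le> v" "v \<le> Suc m"
  shows "xs = map (skip v) q"
proof (rule sym, rule order_iso_eq)
  show "distinct (map (skip v) q)"
    using assms(1) strict_mono_skip by (simp add: is_perm_def distinct_map strict_mono_imp_inj_on)
  show "set (map (skip v) q) = set xs"
    using assms(1,4-) skip_image_atLeastAtMost[of v m] by (simp add: is_perm_def)
  show "order_iso (map (skip v) q) xs"
    using assms(2) strict_mono_skip by (simp add: order_iso_map_strict_mono)
qed (use assms(3) in simp)

lemma perm_adjacent_decomp:
  assumes "is_perm n p" "j + 1 < n" "p ! (j + 1) = p ! j + 1"
  obtains a b where "p = a @ p ! j # Suc (p ! j) # b"
    and "take j p @ drop (j + 1) p = a @ Suc (p ! j) # b"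
    and "1 \<le> p ! j" "Suc (p ! j) \<le> n"
proof
  have len: "length p = n" and set_p: "set p = {1..n}"
    using assms(1) by (auto simp: is_perm_def)
  have drop_Suc: "drop (j + 1) p = Suc (p ! j) # drop (j + 2) p"
    using assms len by (simp add: Cons_nth_drop_Suc[symmetric])
  then show "p = take j p @ p ! j # Suc (p ! j) # drop (j + 2) p"
    using assms(2) len by (metis Cons_nth_drop_Suc Suc_eq_plus1 add_lessD1 append_take_drop_id)
  show "take j p @ drop (j + 1) p = take j p @ Suc (p ! j) # drop (j + 2) p"
    using drop_Suc by simp
  show "1 \<le> p ! j" "Suc (p ! j) \<le> n"
    using nth_mem[of j p] nth_mem[of "j + 1" p] assms(2,3) len set_p by auto
qed

lemma produces_upt_delete_adjacent:
  assumes "1 \<le> v" "Suc v \<le> n" "distinct (a @ v # Suc v # b)" "a @ Suc v # b = map (skip v) q"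
  shows "produces [1..<n + 1] (a @ v # Suc v # b) \<longleftrightarrow> produces [1..<n] q"
proof -
  have upt: "[1..<n + 1] = [1..<v] @ v # Suc v # [v + 2..<n + 1]"
    using assms(1,2) upt_add_eq_append[of 1 v "n + 1 - v"] by (simp add: upt_conv_Cons)
  have skip_upt: "map (skip v) [1..<n] = [1..<v] @ Suc v # [v + 2..<n + 1]"
    using map_skip_upt[of v n] assms(1,2) upt_conv_Cons[of "Suc v" "Suc n"] by simp
  have "produces [1..<n + 1] (a @ v # Suc v # b)
      \<longleftrightarrow> produces ([1..<v] @ Suc v # [v + 2..<n + 1]) (a @ Suc v # b)"
    unfolding upt using assms(3) distinct_upt[of 1 "n + 1"]
    by (intro produces_adjacent_pair_iff) (simp_all only: upt)
  also have "\<dots> \<longleftrightarrow> produces (map (skip v) [1..<n]) (map (skip v) q)"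
    using assms(4) skip_upt by (simp only:)
  also have "\<dots> \<longleftrightarrow> produces [1..<n] q"
    by (intro produces_map_iff strict_mono_imp_inj_on strict_mono_skip)
  finally show ?thesis .
qed

theorem mainTheorem1:
  fixes n j :: nat and p q :: "nat list"
  assumes "n \<ge> 2"
    and "is_perm n p"
    and "j + 1 < n" and "p ! (j + 1) = p ! j + 1"
    and "is_perm (n - 1) q"
    and "order_iso q (take j p @ drop (j + 1) p)"
  shows "achievable p \<longleftrightarrow> achievable q"
proof -
  define v where "v = p ! j"
  obtain a b where p: "p = a @ v # Suc v # b" and p': "take j p @ drop (j + 1) p = a @ Suc v # b"
    and v: "1 \<le> v" "Suc v \<le> n"
    using perm_adjacent_decomp[OF assms(2-4)] unfolding v_def .
  have distinct: "distinct (a @ v # Suc v # b)"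
    using assms(2) p by (simp add: is_perm_def)
  have "set (a @ Suc v # b) = set p - {v}"
    using distinct p by auto
  then have "a @ Suc v # b = map (skip v) q"
    using standardisation_eq_map_skip[of "n - 1" q "a @ Suc v # b" v] assms(1,2,5,6) p' distinct v
    by (simp add: is_perm_def)
  then have "produces [1..<n + 1] p \<longleftrightarrow> produces [1..<n] q"
    using produces_upt_delete_adjacent[OF v distinct] p by simp
  moreover have "length p + 1 = n + 1" "length q + 1 = n"
    using assms(1,2,5) by (simp_all add: is_perm_def)
  ultimately show ?thesis
    by (simp only: achievable_iff_produces)
qed

end
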